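(* Let $\mathcal P=[p_1,\ldots,p_k]\in AP_{n,k}$. If $\mathrm{slack}(\mathcal P)<0$, then there is an index $j<k$ such that $p_j<p_{j+1}$ and $\mathrm{slack}(\mathcal P)=\mathrm{slack}_j(\mathcal P)$.
   Context: $s^{n,k}=\frac{n(n+1)}{2k}$. An ascending partition of $n$ of size $k$ is a sequence of positive integers $[p_1,\ldots,p_k]$ with $p_1\le\cdots\le p_k$ and $\sum_i p_i=n$; $AP_{n,k}$ is the set of all such partitions when $s^{n,k}$ is an integer (and empty otherwise). For $j=1,\ldots,k$, $\mathrm{slack}_j(\mathcal P)=\sum_{i=1}^{p_1+\cdots+p_j}(n-i+1)-j\,s^{n,k}$, and $\mathrm{slack}(\mathcal P)=\min_{1\le j\le k-1}\mathrm{slack}_j(\mathcal P)$. *)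

theory Defs
  imports Main "HOL.Real"
begin

definition s_nk :: "nat \<Rightarrow> nat \<Rightarrow> real" where
  "s_nk n k = real (n * (n + 1)) / (2 * real k)"

text \<open>Ascending partitions of n of size k, as lists [p_1,...,p_k] (list index i-1 holds p_i);
  empty unless s^{n,k} is an integer.\<close>
definition AP :: "nat \<Rightarrow> nat \<Rightarrow> nat list set" where
  "AP n k = {P. length P = k \<and> sorted P \<and> (\<forall>x\<in>set P. 0 < x) \<and> sum_list P = n
               \<and> s_nk n k \<in> \<int>}"

definition slack_j :: "nat \<Rightarrow> nat \<Rightarrow> nat list \<Rightarrow> nat \<Rightarrow> real" where
  "slack_j n k P j = (\<Sum>i = 1..sum_list (take j P). real n - real i + 1) - real j * s_nk n k"

definition slack :: "nat \<Rightarrow> nat \<Rightarrow> nat list \<Rightarrow> real" where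
  "slack n k P = Min ((slack_j n k P) ` {1..k-1})"

end

theory Submission
  imports Defs
begin

text \<open>Write \<open>S\<^sub>j = p\<^sub>1 + \<dots> + p\<^sub>j\<close>. Then \<open>slack\<^sub>j\<close> is the concave quadratic
  \<open>S(n + 1) - S(S + 1)/2\<close> evaluated at \<open>S = S\<^sub>j\<close>, minus the linear term \<open>j s\<^sup>n\<^sup>,\<^sup>k\<close>, and it
  vanishes at \<open>j = 0\<close> and \<open>j = k\<close>. If \<open>p\<^sub>j = p\<^sub>j\<^sub>+\<^sub>1 = p\<close>, the points \<open>S\<^sub>j\<^sub>-\<^sub>1, S\<^sub>j, S\<^sub>j\<^sub>+\<^sub>1\<close> are
  equally spaced, so the second difference of \<open>slack\<^sub>j\<close> at \<open>j\<close> is \<open>-p\<^sup>2 < 0\<close>. Hence a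
  negative minimum of \<open>slack\<^sub>j\<close> over \<open>0 \<le> j \<le> k\<close> can only be attained where
  \<open>p\<^sub>j < p\<^sub>j\<^sub>+\<^sub>1\<close>.\<close>

lemma sum_descending_closed_form:
  "(\<Sum>i = 1..m. real n - real i + 1) = real m * (real n + 1) - real m * (real m + 1) / 2"
  by (induction m) (auto simp: field_simps)

lemma slack_j_0 [simp]: "slack_j n k P 0 = 0"
  by (simp add: slack_j_def)

lemma slack_j_length:
  assumes "length P = k" and "sum_list P = n"
  shows "slack_j n k P k = 0"
  using assms unfolding slack_j_def sum_descending_closed_form
  by (cases "k = 0") (auto simp: s_nk_def field_simps)

lemma slack_j_second_difference:
  assumes "0 < j" and "j < length P" and "P ! (j - 1) = P ! j"
  shows "slack_j n k P (j - 1) + slack_j n k P (j + 1) - 2 * slack_j n k P j = - (real (P ! j))\<^sup>2"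
proof -
  define a where "a = sum_list (take (j - 1) P)"
  define p where "p = P ! j"
  have take_j: "sum_list (take j P) = a + p"
    using assms take_Suc_conv_app_nth[of "j - 1" P] unfolding a_def p_def by simp
  have take_Suc_j: "sum_list (take (j + 1) P) = a + 2 * p"
    using assms(2) take_j take_Suc_conv_app_nth[of j P] unfolding p_def by simp
  show ?thesis
    using assms(1)
    unfolding slack_j_def sum_descending_closed_form take_j take_Suc_j a_def[symmetric] p_def[symmetric]
    by (simp add: of_nat_diff field_simps power2_eq_square)
qed

lemma slack_le_slack_j:
  assumes "i \<in> {1..k - 1}"
  shows "slack n k P \<le> slack_j n k P i"
  using assms unfolding slack_def by (intro Min_le) auto

lemma slack_attained:
  assumes "k \<ge> 2"
  obtains j where "j \<in> {1..k - 1}" and "slack n k P = slack_j n k P j"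
proof -
  have "slack n k P \<in> slack_j n k P ` {1..k - 1}"
    unfolding slack_def using assms by (intro Min_in) auto
  then show ?thesis using that by blast
qed

lemma negative_slack_le_slack_j:
  assumes "P \<in> AP n k" and "slack n k P < 0" and "i \<le> k"
  shows "slack n k P \<le> slack_j n k P i"
proof -
  have "length P = k" and "sum_list P = n"
    using assms(1) by (auto simp: AP_def)
  then show ?thesis
    using assms(2,3) slack_le_slack_j[of i k n P] slack_j_length[of P k n]
    by (cases "i = 0 \<or> i = k") auto
qed

theorem mainTheorem6:
  fixes n k :: nat and P :: "nat list"
  assumes "k \<ge> 2"
    and "P \<in> AP n k"
    and "slack n k P < 0"
  shows "\<exists>j. 1 \<le> j \<and> j < k \<and> P ! (j - 1) < P ! j \<and> slack n k P = slack_j n k P j"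
proof -
  obtain j where "j \<in> {1..k - 1}" and slack_eq: "slack n k P = slack_j n k P j"
    using slack_attained[OF assms(1)] .
  then have j: "0 < j" "j < k"
    by auto
  have len: "length P = k" and "sorted P" and pos: "\<forall>x\<in>set P. 0 < x"
    using assms(2) by (auto simp: AP_def)
  have "P ! (j - 1) \<le> P ! j"
    using \<open>sorted P\<close> j len by (intro sorted_nth_mono) auto
  moreover have "P ! (j - 1) \<noteq> P ! j"
  proof
    assume "P ! (j - 1) = P ! j"
    then have "slack_j n k P (j - 1) + slack_j n k P (j + 1) - 2 * slack_j n k P j = - (real (P ! j))\<^sup>2"
      using j len by (intro slack_j_second_difference) auto
    moreover have "0 < (real (P ! j))\<^sup>2"
      using j len pos by (simp add: nth_mem)
    moreover have "slack_j n k P j \<le> slack_j n k P (j - 1)" "slack_j n k P j \<le> slack_j n k P (j + 1)"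
      using negative_slack_le_slack_j[OF assms(2,3), of "j - 1"]
        negative_slack_le_slack_j[OF assms(2,3), of "j + 1"] slack_eq j by simp_all
    ultimately show False
      by linarith
  qed
  ultimately show ?thesis
    using j slack_eq by (intro exI[of _ j]) auto
qed

end
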